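(* Let $f:\mathbb{R}^d\to\mathbb{R}$ be $C^3$, $1\le k\le d-1$, and let $\mathbf{x}^*$ be a critical point of $f$. Suppose there exist $\delta>0$, $L>\mu>0$, $M>0$ such that for all $\mathbf{x}$ with $\|\mathbf{x}-\mathbf{x}^*\|_2\le\delta$ the eigenvalues of $\nabla^2 f(\mathbf{x})$ satisfy $-L<\lambda_1\le\dots\le\lambda_k<-\mu<0<\mu<\lambda_{k+1}\le\dots\le\lambda_d<L$, and $\|\nabla^2 f(\mathbf{x})-\nabla^2 f(\mathbf{y})\|_2\le M\|\mathbf{x}-\mathbf{y}\|_2$ for all $\mathbf{x},\mathbf{y}$ in that ball. Consider the iteration $\mathbf{x}(n+1)=\mathbf{x}(n)-\alpha(n)\mathcal{P}_V\nabla f(\mathbf{x}(n);\omega(n))$ with $\mathcal{P}_V=I-2\sum_{i=1}^k\mathbf{v}_i(\mathbf{x}(n))\mathbf{v}_i(\mathbf{x}(n))^\top$. If $\alpha(n)<\frac{1}{2\mu}$ and $\mathbf{x}(n)\in U=\{\mathbf{x}:\|\mathbf{x}-\mathbf{x}^*\|_2\le\min(\mu/M,\delta)\}$, then $$\|\mathbf{x}(n+1)-\mathbf{x}^*\|_2^2\le(1-\alpha(n)\mu)\|\mathbf{x}(n)-\mathbf{x}^*\|_2^2+\alpha(n)\psi(n)+\alpha(n)^2\|\nabla f(\mathbf{x}(n);\omega(n))\|_2^2,$$ where $\psi(n)=-\langle 2\mathcal{P}_V(\nabla f(\mathbf{x}(n);\omega(n))-\nabla f(\mathbf{x}(n))),\mathbf{x}(n)-\mathbf{x}^*\rangle$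 is a martingale difference sequence with zero (conditional) expectation.
   Context: $\mathbf{v}_1(\mathbf{x}),\dots,\mathbf{v}_k(\mathbf{x})$ are orthonormal eigenvectors of $\nabla^2 f(\mathbf{x})$ corresponding to its $k$ smallest eigenvalues. $\nabla f(\mathbf{x};\omega)$ is a stochastic gradient with $\omega$ drawn from a probability space, satisfying $\mathbb{E}\,\nabla f(\mathbf{x};\omega)=\nabla f(\mathbf{x})$ for all $\mathbf{x}$; $\omega(n)$ is a fresh sample independent of $\mathbf{x}(0),\dots,\mathbf{x}(n)$. *)

theory Defs
  imports "HOL-Analysis.Analysis" "HOL-Probability.Probability"
begin

definition outer :: "real^'n \<Rightarrow> real^'n \<Rightarrow> real^'n^'n" where
  "outer u w = (\<chi> i j. u $ i * w $ j)"

text \<open>A full orthonormal eigenbasis w 0, ..., w (d-1) of A (d = CARD('n)), with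
  eigenvalues lam 0 \<le> ... \<le> lam (d-1) sorted increasingly (0-based indexing).\<close>
definition sorted_eigenbasis :: "real^'n^'n \<Rightarrow> (nat \<Rightarrow> real) \<Rightarrow> (nat \<Rightarrow> real^'n) \<Rightarrow> bool" where
  "sorted_eigenbasis A lam w \<longleftrightarrow>
     (\<forall>i<CARD('n). A *v w i = lam i *\<^sub>R w i) \<and>
     (\<forall>i<CARD('n). \<forall>j<CARD('n). w i \<bullet> w j = (if i = j then 1 else 0)) \<and>
     (\<forall>i j. i \<le> j \<longrightarrow> j < CARD('n) \<longrightarrow> lam i \<le> lam j)"

definition PV :: "(nat \<Rightarrow> real^'n \<Rightarrow> real^'n) \<Rightarrow> nat \<Rightarrow> real^'n \<Rightarrow> real^'n^'n" where
  "PV v k y = mat 1 - (2::real) *\<^sub>R (\<Sum>i<k. outer (v i y) (v i y))"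

end

theory Submission
  imports Defs
begin

(* Write e = x(n) - x* and g = grad f(x(n)). Since x* is critical and the Hessian is
   M-Lipschitz, g = Hess f(x(n)) e + r with |r| <= M/2 |e|^2 <= mu/2 |e|, by |e| <= mu/M.
   Sorted eigenvalues of a matrix are unique (orthonormal eigenvectors with eigenvalues
   below and above a threshold number at most d in total), so the basis defining P_V has
   the sign pattern assumed on the ball; hence P_V reflects exactly the eigendirections
   with eigenvalue < -mu, and (P_V Hess f(x(n)) e) . e >= mu |e|^2. As P_V is an isometry,
   2 (P_V g) . e >= mu |e|^2, and expanding |e - alpha P_V G|^2 gives the inequality.
   The noise term is a fixed linear functional of G - g, so it has mean zero. *)

definition orthonormal_on :: "'i set \<Rightarrow> ('i \<Rightarrow> 'a::real_inner) \<Rightarrow> bool" where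
  "orthonormal_on I w \<longleftrightarrow> (\<forall>i\<in>I. \<forall>j\<in>I. w i \<bullet> w j = (if i = j then 1 else 0))"

lemma orthonormal_on_subset: "orthonormal_on J w \<Longrightarrow> I \<subseteq> J \<Longrightarrow> orthonormal_on I w"
  unfolding orthonormal_on_def by blast

lemma sorted_eigenbasisD:
  fixes A :: "real^'n^'n"
  assumes "sorted_eigenbasis A lam w"
  shows "orthonormal_on {..<CARD('n)} w"
    and "\<forall>i\<in>{..<CARD('n)}. A *v w i = lam i *\<^sub>R w i"
    and "i \<le> j \<Longrightarrow> j < CARD('n) \<Longrightarrow> lam i \<le> lam j"
  using assms by (auto simp: sorted_eigenbasis_def orthonormal_on_def)

lemma inner_orthonormal_sum:
  assumes "finite I" "orthonormal_on I w" "j \<in> I"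
  shows "w j \<bullet> (\<Sum>i\<in>I. c i *\<^sub>R w i) = c j"
proof -
  have "w j \<bullet> (\<Sum>i\<in>I. c i *\<^sub>R w i) = (\<Sum>i\<in>I. if i = j then c j else 0)"
    unfolding inner_sum_right using assms(2,3) by (intro sum.cong refl) (auto simp: orthonormal_on_def)
  then show ?thesis using assms(1,3) by simp
qed

lemma inner_sum_orthonormal:
  assumes "finite I" "orthonormal_on I w"
  shows "(\<Sum>i\<in>I. a i *\<^sub>R w i) \<bullet> (\<Sum>j\<in>I. b j *\<^sub>R w j) = (\<Sum>i\<in>I. a i * b i)"
  by (simp add: inner_sum_left inner_orthonormal_sum[OF assms])

lemma orthonormal_on_inj: "orthonormal_on I w \<Longrightarrow> inj_on w I"
  unfolding orthonormal_on_def inj_on_def by (metis zero_neq_one)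

lemma orthonormal_on_independent:
  assumes "orthonormal_on I w"
  shows "independent (w ` I)"
proof (rule pairwise_orthogonal_independent)
  show "pairwise orthogonal (w ` I)"
    using assms by (auto simp: pairwise_def orthogonal_def orthonormal_on_def)
  show "0 \<notin> w ` I"
    using assms by (force simp: orthonormal_on_def)
qed

lemma dim_orthonormal_on: "orthonormal_on I w \<Longrightarrow> dim (w ` I) = card I"
  by (metis dim_eq_card_independent orthonormal_on_independent card_image orthonormal_on_inj)

lemma span_orthonormal_on_UNIV:
  fixes w :: "'i \<Rightarrow> 'a::euclidean_space"
  assumes "orthonormal_on I w" "card I = DIM('a)"
  shows "span (w ` I) = UNIV"
  using assms card_ge_dim_independent[of "w ` I" UNIV]
  by (auto simp: orthonormal_on_independent card_image orthonormal_on_inj)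

lemma orthonormal_expansion:
  assumes "finite I" "orthonormal_on I w" "u \<in> span (w ` I)"
  shows "u = (\<Sum>i\<in>I. (w i \<bullet> u) *\<^sub>R w i)"
proof -
  define r where "r = u - (\<Sum>i\<in>I. (w i \<bullet> u) *\<^sub>R w i)"
  have "r \<in> span (w ` I)"
    unfolding r_def by (intro span_diff assms(3) span_sum span_scale span_base imageI)
  moreover have "orthogonal (w j) r" if "j \<in> I" for j
    using that by (simp add: r_def orthogonal_def inner_diff_right inner_orthonormal_sum[OF assms(1,2)])
  ultimately have "orthogonal r r"
    by (auto intro: orthogonal_to_span simp: orthogonal_commute)
  then show ?thesis by (simp add: r_def orthogonal_self)
qed

lemma inner_orthonormal_expansion:
  assumes "finite I" "orthonormal_on I w" "u \<in> span (w ` I)"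
  shows "u \<bullet> z = (\<Sum>i\<in>I. (w i \<bullet> u) * (w i \<bullet> z))"
  by (subst orthonormal_expansion[OF assms]) (simp add: inner_sum_left)

lemma inner_self_orthonormal_expansion:
  assumes "finite I" "orthonormal_on I w" "u \<in> span (w ` I)"
  shows "u \<bullet> u = (\<Sum>i\<in>I. (w i \<bullet> u)\<^sup>2)"
  by (simp add: inner_orthonormal_expansion[OF assms] power2_eq_square)

lemma inner_eigenvector_linear:
  assumes "finite I" "orthonormal_on I w" "u \<in> span (w ` I)"
    and "linear T" "\<forall>i\<in>I. T (w i) = lam i *\<^sub>R w i" "j \<in> I"
  shows "w j \<bullet> T u = lam j * (w j \<bullet> u)"
proof -
  have "T u = (\<Sum>i\<in>I. (lam i * (w i \<bullet> u)) *\<^sub>R w i)"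
    by (subst orthonormal_expansion[OF assms(1-3)])
      (simp add: linear_sum[OF assms(4)] linear_scale[OF assms(4)] assms(5) mult.commute)
  then show ?thesis
    using inner_orthonormal_sum[OF assms(1,2,6)] by simp
qed

lemma quadratic_form_orthonormal_eigenvectors:
  assumes "finite I" "orthonormal_on I w" "u \<in> span (w ` I)"
    and "linear T" "\<forall>i\<in>I. T (w i) = lam i *\<^sub>R w i"
  shows "u \<bullet> T u = (\<Sum>i\<in>I. lam i * (w i \<bullet> u)\<^sup>2)"
  unfolding inner_orthonormal_expansion[OF assms(1-3)]
  by (intro sum.cong refl) (simp add: inner_eigenvector_linear[OF assms] power2_eq_square)

lemma quadratic_form_less_if_eigenvalues_less:
  assumes "finite I" "orthonormal_on I w" "u \<in> span (w ` I)" "u \<noteq> 0"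
    and "linear T" "\<forall>i\<in>I. T (w i) = lam i *\<^sub>R w i" "\<forall>i\<in>I. lam i < c"
  shows "u \<bullet> T u < c * (u \<bullet> u)"
proof -
  obtain j where j: "j \<in> I" "w j \<bullet> u \<noteq> 0"
    using orthonormal_expansion[OF assms(1-3)] assms(4)
    by (metis (no_types, lifting) scale_eq_0_iff sum.neutral)
  have "0 < (\<Sum>i\<in>I. (c - lam i) * (w i \<bullet> u)\<^sup>2)"
    using j assms(7) by (intro sum_pos2[OF assms(1) j(1)]) auto
  then show ?thesis
    by (simp add: quadratic_form_orthonormal_eigenvectors[OF assms(1-3,5,6)]
        inner_self_orthonormal_expansion[OF assms(1-3)] left_diff_distrib
        sum_subtractf sum_distrib_left)
qed

lemma quadratic_form_ge_if_eigenvalues_ge: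
  assumes "finite I" "orthonormal_on I w" "u \<in> span (w ` I)"
    and "linear T" "\<forall>i\<in>I. T (w i) = lam i *\<^sub>R w i" "\<forall>i\<in>I. c \<le> lam i"
  shows "c * (u \<bullet> u) \<le> u \<bullet> T u"
proof -
  have "0 \<le> (\<Sum>i\<in>I. (lam i - c) * (w i \<bullet> u)\<^sup>2)"
    using assms(6) by (intro sum_nonneg) auto
  then show ?thesis
    by (simp add: quadratic_form_orthonormal_eigenvectors[OF assms(1-5)]
        inner_self_orthonormal_expansion[OF assms(1-3)] left_diff_distrib
        sum_subtractf sum_distrib_left)
qed

lemma card_orthonormal_eigenvectors_separated_le:
  fixes T :: "'a::euclidean_space \<Rightarrow> 'a"
  assumes T: "linear T"
    and a: "finite I" "orthonormal_on I a" "\<forall>i\<in>I. T (a i) = la i *\<^sub>R a i" "\<forall>i\<in>I. la i < c"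
    and b: "finite J" "orthonormal_on J b" "\<forall>j\<in>J. T (b j) = lb j *\<^sub>R b j" "\<forall>j\<in>J. c \<le> lb j"
  shows "card I + card J \<le> DIM('a)"
proof (rule ccontr)
  assume too_many: "\<not> ?thesis"
  let ?S = "span (a ` I)" and ?T = "span (b ` J)"
  have "dim {x + y |x y. x \<in> ?S \<and> y \<in> ?T} + dim (?S \<inter> ?T) = card I + card J"
    using dim_sums_Int[of ?S ?T] by (simp add: dim_orthonormal_on a(2) b(2))
  moreover have "dim {x + y |x y. x \<in> ?S \<and> y \<in> ?T} \<le> DIM('a)"
    using dim_subset_UNIV by simp
  ultimately have "dim (?S \<inter> ?T) \<noteq> 0"
    using too_many by linarith
  then obtain u where u: "u \<in> ?S" "u \<in> ?T" "u \<noteq> 0"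
    by (metis dim_eq_0 subsetI Int_iff insert_iff empty_iff)
  have "u \<bullet> T u < c * (u \<bullet> u)"
    by (rule quadratic_form_less_if_eigenvalues_less[OF a(1,2) u(1,3) T a(3,4)])
  moreover have "c * (u \<bullet> u) \<le> u \<bullet> T u"
    by (rule quadratic_form_ge_if_eigenvalues_ge[OF b(1,2) u(2) T b(3,4)])
  ultimately show False by simp
qed

lemma sorted_eigenbasis_eigenvalues_unique:
  fixes A :: "real^'n^'n"
  assumes "sorted_eigenbasis A lam w" "sorted_eigenbasis A lam' w'" "j < CARD('n)"
  shows "lam' j = lam j"
proof -
  have "\<not> lam' j < lam j" if "sorted_eigenbasis A lam w" "sorted_eigenbasis A lam' w'" for lam lam' w w'
  proof
    assume less: "lam' j < lam j"
    have "card {..j} + card {j..<CARD('n)} \<le> DIM(real^'n)"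
    proof (rule card_orthonormal_eigenvectors_separated_le[where T = "(*v) A" and c = "lam j"])
      show "orthonormal_on {..j} w'" "orthonormal_on {j..<CARD('n)} w"
        using sorted_eigenbasisD(1)[OF that(2)] sorted_eigenbasisD(1)[OF that(1)] assms(3)
        by (auto elim!: orthonormal_on_subset)
      show "\<forall>i\<in>{..j}. A *v w' i = lam' i *\<^sub>R w' i" "\<forall>i\<in>{j..<CARD('n)}. A *v w i = lam i *\<^sub>R w i"
        using sorted_eigenbasisD(2)[OF that(2)] sorted_eigenbasisD(2)[OF that(1)] assms(3) by auto
      show "\<forall>i\<in>{..j}. lam' i < lam j" "\<forall>i\<in>{j..<CARD('n)}. lam j \<le> lam i"
        using sorted_eigenbasisD(3)[OF that(2)] sorted_eigenbasisD(3)[OF that(1)] assms(3) less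
        by (auto intro: le_less_trans)
    qed auto
    then show False using assms(3) by simp
  qed
  then show ?thesis using assms(1,2) by (meson linorder_neqE)
qed

lemma outer_mult_vec: "outer u w *v z = (w \<bullet> z) *\<^sub>R u"
  by (simp add: outer_def matrix_vector_mult_def vec_eq_iff inner_vec_def sum_distrib_left
      mult.commute mult.left_commute)

lemma PV_mult_vec: "PV v k y *v z = z - 2 *\<^sub>R (\<Sum>i<k. (v i y \<bullet> z) *\<^sub>R v i y)"
proof -
  have "(\<Sum>i<k. outer (v i y) (v i y)) *v z = (\<Sum>i<k. outer (v i y) (v i y) *v z)"
    by (induction k) (simp_all add: matrix_vector_mult_add_rdistrib)
  then show ?thesis
    by (simp add: PV_def matrix_vector_mult_diff_rdistrib outer_mult_vec
        scaleR_matrix_vector_assoc[symmetric])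
qed

lemma norm_orthonormal_reflection:
  assumes "finite K" "orthonormal_on K u"
  shows "norm (z - 2 *\<^sub>R (\<Sum>i\<in>K. (u i \<bullet> z) *\<^sub>R u i)) = norm z"
proof -
  let ?S = "\<Sum>i\<in>K. (u i \<bullet> z) *\<^sub>R u i"
  have "?S \<bullet> ?S = (\<Sum>i\<in>K. (u i \<bullet> z) * (u i \<bullet> z))"
    by (rule inner_sum_orthonormal[OF assms])
  moreover have "z \<bullet> ?S = (\<Sum>i\<in>K. (u i \<bullet> z) * (u i \<bullet> z))"
    by (simp add: inner_sum_right inner_commute)
  ultimately have "z \<bullet> ?S = ?S \<bullet> ?S"
    by simp
  then have "(z - 2 *\<^sub>R ?S) \<bullet> (z - 2 *\<^sub>R ?S) = z \<bullet> z"
    by (simp add: inner_diff_left inner_diff_right inner_commute)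
  then show ?thesis by (simp add: norm_eq_sqrt_inner)
qed

lemma reflected_quadratic_form_ge:
  fixes T :: "'a::euclidean_space \<Rightarrow> 'a"
  assumes "finite I" "orthonormal_on I w" "card I = DIM('a)"
    and "linear T" "\<forall>i\<in>I. T (w i) = lam i *\<^sub>R w i"
    and "K \<subseteq> I" "\<forall>i\<in>K. lam i \<le> - \<mu>" "\<forall>i\<in>I - K. \<mu> \<le> lam i"
  shows "\<mu> * (e \<bullet> e) \<le> (T e - 2 *\<^sub>R (\<Sum>i\<in>K. (w i \<bullet> T e) *\<^sub>R w i)) \<bullet> e"
proof -
  have e: "e \<in> span (w ` I)"
    using span_orthonormal_on_UNIV[OF assms(2,3)] by simp
  define q where "q i = (w i \<bullet> e)\<^sup>2" for i
  have "\<mu> * (e \<bullet> e) = (\<Sum>i\<in>I - K. \<mu> * q i) + (\<Sum>i\<in>K. \<mu> * q i)"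
    by (simp add: inner_self_orthonormal_expansion[OF assms(1,2) e] q_def sum_distrib_left
        sum.subset_diff[OF assms(6,1)] distrib_left)
  also have "\<dots> \<le> (\<Sum>i\<in>I - K. lam i * q i) + (\<Sum>i\<in>K. - lam i * q i)"
    using assms(7,8) by (intro add_mono sum_mono mult_right_mono) (auto simp: q_def)
  also have "\<dots> = (\<Sum>i\<in>I. lam i * q i) - 2 * (\<Sum>i\<in>K. lam i * q i)"
    by (simp add: sum.subset_diff[OF assms(6,1)] sum_negf)
  also have "\<dots> = (T e - 2 *\<^sub>R (\<Sum>i\<in>K. (w i \<bullet> T e) *\<^sub>R w i)) \<bullet> e"
  proof -
    have "(\<Sum>i\<in>K. (w i \<bullet> T e) *\<^sub>R w i) \<bullet> e = (\<Sum>i\<in>K. lam i * q i)"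
      unfolding inner_sum_left q_def using assms(6)
      by (intro sum.cong refl) (auto simp: inner_eigenvector_linear[OF assms(1,2) e assms(4,5)]
          power2_eq_square)
    then show ?thesis
      using quadratic_form_orthonormal_eigenvectors[OF assms(1,2) e assms(4,5)]
      by (simp add: q_def inner_diff_left inner_diff_right inner_commute)
  qed
  finally show ?thesis .
qed

lemma norm_PV_mult_vec:
  fixes A :: "real^'n^'n"
  assumes "sorted_eigenbasis A lam w" "\<forall>i<k. w i = v i y" "k \<le> CARD('n)"
  shows "norm (PV v k y *v z) = norm z"
proof -
  have "orthonormal_on {..<k} w"
    using orthonormal_on_subset[OF sorted_eigenbasisD(1)[OF assms(1)]] assms(3) by auto
  then show ?thesis
    using norm_orthonormal_reflection[of "{..<k}" w z] by (simp add: PV_mult_vec assms(2))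
qed

lemma PV_quadratic_form_ge:
  fixes A :: "real^'n^'n"
  assumes "sorted_eigenbasis A lam w" "\<forall>i<k. w i = v i y" "k \<le> CARD('n)"
    and "\<forall>i<k. lam i \<le> - \<mu>" "\<forall>i. k \<le> i \<and> i < CARD('n) \<longrightarrow> \<mu> \<le> lam i"
  shows "\<mu> * (e \<bullet> e) \<le> (PV v k y *v (A *v e)) \<bullet> e"
proof -
  have "\<mu> * (e \<bullet> e) \<le> (A *v e - 2 *\<^sub>R (\<Sum>i<k. (w i \<bullet> (A *v e)) *\<^sub>R w i)) \<bullet> e"
    using sorted_eigenbasisD(1,2)[OF assms(1)] assms(3-5)
    by (intro reflected_quadratic_form_ge[where T = "(*v) A" and I = "{..<CARD('n)}"]) auto
  then show ?thesis
    by (simp add: PV_mult_vec assms(2))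
qed

lemma lipschitz_derivative_remainder_le:
  fixes g :: "'a::real_normed_vector \<Rightarrow> 'b::real_normed_vector"
  assumes deriv: "\<And>y. y \<in> S \<Longrightarrow> (g has_derivative D y) (at y)"
    and lip: "\<And>y z. y \<in> S \<Longrightarrow> z \<in> S \<Longrightarrow> onorm (\<lambda>h. D y h - D z h) \<le> M * norm (y - z)"
    and S: "convex S" "x \<in> S" "y \<in> S"
  shows "norm (g y - g x - D y (y - x)) \<le> M / 2 * (norm (y - x))\<^sup>2"
proof -
  define e where "e = y - x"
  define K where "K = M * (norm e)\<^sup>2"
  define \<phi> where "\<phi> t = g (x + t *\<^sub>R e) - t *\<^sub>R D y e" for t :: real
  define \<psi> where "\<psi> t = - (K / 2) * (1 - t)\<^sup>2" for t :: real
  have seg: "x + t *\<^sub>R e \<in> S" if "t \<in> {0..1}" for t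
    using convexD_alt[OF S(1,2,3), of t] that by (simp add: e_def algebra_simps)
  have d\<phi>: "(\<phi> has_vector_derivative (D (x + t *\<^sub>R e) e - D y e)) (at t)" if "t \<in> {0..1}" for t
  proof -
    have "((\<lambda>t. x + t *\<^sub>R e) has_derivative (\<lambda>h. h *\<^sub>R e)) (at t)"
      by (auto intro!: derivative_eq_intros)
    from has_derivative_compose[OF this deriv[OF seg[OF that]]]
    have "((\<lambda>t. g (x + t *\<^sub>R e)) has_derivative (\<lambda>h. D (x + t *\<^sub>R e) (h *\<^sub>R e))) (at t)" .
    moreover have "linear (D (x + t *\<^sub>R e))"
      using deriv[OF seg[OF that]] has_derivative_linear by blast
    ultimately show ?thesis
      unfolding \<phi>_def has_vector_derivative_def
      by (auto intro!: derivative_eq_intros simp: linear_scale linear_diff algebra_simps)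
  qed
  have d\<psi>: "(\<psi> has_vector_derivative K * (1 - t)) (at t)" for t
    unfolding \<psi>_def has_real_derivative_iff_has_vector_derivative[symmetric]
    by (auto intro!: derivative_eq_intros simp: field_simps)
  have bound: "norm (D (x + t *\<^sub>R e) e - D y e) \<le> K * (1 - t)" if t: "0 < t" "t < 1" for t
  proof -
    let ?p = "x + t *\<^sub>R e"
    have p: "?p \<in> S" using seg t by simp
    have "bounded_linear (\<lambda>h. D ?p h - D y h)"
      using deriv p S(3) by (intro bounded_linear_sub has_derivative_bounded_linear)
    then have "norm (D ?p e - D y e) \<le> onorm (\<lambda>h. D ?p h - D y h) * norm e"
      by (rule onorm)
    also have "\<dots> \<le> M * norm (?p - y) * norm e"
      using lip[OF p S(3)] by (intro mult_right_mono) auto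
    also have "?p - y = (t - 1) *\<^sub>R e" by (simp add: e_def algebra_simps)
    finally show ?thesis
      using t by (simp add: K_def power2_eq_square mult_ac)
  qed
  have "norm (\<phi> 1 - \<phi> 0) \<le> \<psi> 1 - \<psi> 0"
  proof (rule differentiable_bound_general[OF zero_less_one _ _ _ _ bound])
    show "continuous_on {0..1} \<phi>"
      using d\<phi> by (meson continuous_at_imp_continuous_on has_vector_derivative_continuous)
    show "continuous_on {0..1} \<psi>"
      using d\<psi> by (meson continuous_at_imp_continuous_on has_vector_derivative_continuous)
  qed (use d\<phi> d\<psi> in auto)
  then show ?thesis
    by (simp add: \<phi>_def \<psi>_def K_def e_def algebra_simps)
qed

lemma descent_direction_perturbed:
  fixes P :: "'a::real_inner \<Rightarrow> 'a"
  assumes "linear P" "\<And>z. norm (P z) = norm z"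
    and "\<mu> * (e \<bullet> e) \<le> P h \<bullet> e" "norm (g - h) \<le> M / 2 * (norm e)\<^sup>2" "M * norm e \<le> \<mu>"
  shows "\<mu> * (e \<bullet> e) \<le> 2 * (P g \<bullet> e)"
proof -
  have "- (P (g - h) \<bullet> e) \<le> norm (g - h) * norm e"
    using norm_cauchy_schwarz[of "- P (g - h)" e] assms(2) by simp
  also have "\<dots> \<le> M / 2 * (norm e)\<^sup>2 * norm e"
    using assms(4) by (rule mult_right_mono) simp
  also have "\<dots> = (M * norm e) / 2 * (e \<bullet> e)"
    by (simp add: power2_norm_eq_inner[symmetric] power2_eq_square)
  also have "\<dots> \<le> \<mu> / 2 * (e \<bullet> e)"
    using assms(5) by (intro mult_right_mono divide_right_mono) auto
  finally show ?thesis
    using assms(3) by (simp add: linear_diff[OF assms(1)] inner_diff_left)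
qed

lemma isometry_descent_step_le:
  fixes P :: "'a::real_inner \<Rightarrow> 'a"
  assumes "linear P" "\<And>z. norm (P z) = norm z" "0 \<le> a" "\<mu> * (e \<bullet> e) \<le> 2 * (P g \<bullet> e)"
  shows "(norm (e - a *\<^sub>R P s))\<^sup>2
    \<le> (1 - a * \<mu>) * (norm e)\<^sup>2 + a * (- (2 *\<^sub>R P (s - g)) \<bullet> e) + a\<^sup>2 * (norm s)\<^sup>2"
proof -
  have "(norm (e - a *\<^sub>R P s))\<^sup>2 = (e - a *\<^sub>R P s) \<bullet> (e - a *\<^sub>R P s)"
    by (rule power2_norm_eq_inner)
  also have "\<dots> = e \<bullet> e - 2 * a * (P s \<bullet> e) + a\<^sup>2 * (P s \<bullet> P s)"
    by (simp add: inner_diff_left inner_diff_right inner_commute algebra_simps power2_eq_square)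
  also have "P s \<bullet> P s = (norm s)\<^sup>2"
    by (simp add: assms(2) flip: power2_norm_eq_inner)
  finally have "(norm (e - a *\<^sub>R P s))\<^sup>2 = e \<bullet> e - 2 * a * (P s \<bullet> e) + a\<^sup>2 * (norm s)\<^sup>2" .
  moreover have "P s \<bullet> e = P (s - g) \<bullet> e + P g \<bullet> e"
    by (simp add: linear_diff[OF assms(1)] inner_diff_left)
  moreover have "a * (\<mu> * (e \<bullet> e)) \<le> a * (2 * (P g \<bullet> e))"
    by (rule mult_left_mono[OF assms(4) assms(3)])
  ultimately show ?thesis
    by (simp add: power2_norm_eq_inner algebra_simps)
qed

lemma (in prob_space) integral_bounded_linear_centered:
  fixes X :: "'a \<Rightarrow> 'b::{banach, second_countable_topology}"
    and T :: "'b \<Rightarrow> 'c::{banach, second_countable_topology}"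
  assumes "bounded_linear T" "integrable M X"
  shows "(\<integral>w. T (X w - expectation X) \<partial>M) = 0"
proof -
  have "(\<integral>w. T (X w - expectation X) \<partial>M) = T (\<integral>w. X w - expectation X \<partial>M)"
    using assms by (intro integral_bounded_linear) auto
  also have "\<dots> = 0"
    using assms by (simp add: prob_space linear_0[OF bounded_linear.linear])
  finally show ?thesis .
qed

theorem proposition4p3:
  fixes f :: "real^'d \<Rightarrow> real"
    and grad :: "real^'d \<Rightarrow> real^'d"
    and H :: "real^'d \<Rightarrow> real^'d^'d"
    and H3 :: "real^'d \<Rightarrow> ((real^'d) \<Rightarrow>\<^sub>L (real^'d^'d))"
    and v :: "nat \<Rightarrow> real^'d \<Rightarrow> real^'d"
    and M\<^sub>\<omega> :: "'w measure"
    and G :: "real^'d \<Rightarrow> 'w \<Rightarrow> real^'d"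
    and x :: "nat \<Rightarrow> real^'d" and \<omega> :: "nat \<Rightarrow> 'w" and \<alpha> :: "nat \<Rightarrow> real"
    and xs :: "real^'d" and k n :: nat and \<delta> L \<mu> M :: real
  assumes grad: "\<And>y. (f has_derivative (\<lambda>h. grad y \<bullet> h)) (at y)"
    and hess: "\<And>y. (grad has_derivative (\<lambda>h. H y *v h)) (at y)"
    and third: "\<And>y. (H has_derivative blinfun_apply (H3 y)) (at y)"
    and C3: "continuous_on UNIV H3"
    and k: "1 \<le> k" "k \<le> CARD('d) - 1"
    and crit: "grad xs = 0"
    and params: "\<delta> > 0" "L > \<mu>" "\<mu> > 0" "M > 0"
    and spec: "\<forall>y\<in>cball xs \<delta>. \<exists>lam w. sorted_eigenbasis (H y) lam w \<and>
                 (\<forall>i<k. - L < lam i \<and> lam i < - \<mu>) \<and>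
                 (\<forall>i. k \<le> i \<and> i < CARD('d) \<longrightarrow> \<mu> < lam i \<and> lam i < L)"
    and lip: "\<forall>y\<in>cball xs \<delta>. \<forall>z\<in>cball xs \<delta>.
                 onorm (\<lambda>h. (H y - H z) *v h) \<le> M * norm (y - z)"
    and evecs: "\<forall>y. \<exists>lam w. sorted_eigenbasis (H y) lam w \<and> (\<forall>i<k. w i = v i y)"
    and prob: "prob_space M\<^sub>\<omega>"
    and Gint: "\<And>y. integrable M\<^sub>\<omega> (G y)"
    and Gmean: "\<And>y. (\<integral>w. G y w \<partial>M\<^sub>\<omega>) = grad y"
    and omega: "\<omega> n \<in> space M\<^sub>\<omega>"
    and iter: "\<And>m. x (Suc m) = x m - \<alpha> m *\<^sub>R (PV v k (x m) *v G (x m) (\<omega> m))"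
    and step: "0 \<le> \<alpha> n" "\<alpha> n < 1 / (2 * \<mu>)"
    and inU: "x n \<in> cball xs (min (\<mu> / M) \<delta>)"
  shows "(norm (x (Suc n) - xs))\<^sup>2 \<le> (1 - \<alpha> n * \<mu>) * (norm (x n - xs))\<^sup>2
            + \<alpha> n * (- ((2::real) *\<^sub>R (PV v k (x n) *v (G (x n) (\<omega> n) - grad (x n)))) \<bullet> (x n - xs))
            + (\<alpha> n)\<^sup>2 * (norm (G (x n) (\<omega> n)))\<^sup>2
         \<and> (\<integral>w. - ((2::real) *\<^sub>R (PV v k (x n) *v (G (x n) w - grad (x n)))) \<bullet> (x n - xs) \<partial>M\<^sub>\<omega>) = 0"
proof -
  define e where "e = x n - xs"
  define P where "P = PV v k (x n)"
  have y_ball: "x n \<in> cball xs \<delta>" and e_small: "M * norm e \<le> \<mu>"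
    using inU params by (auto simp: e_def dist_norm norm_minus_commute field_simps)
  obtain lam w where eig: "sorted_eigenbasis (H (x n)) lam w"
    and neg: "\<forall>i<k. - L < lam i \<and> lam i < - \<mu>"
    and pos: "\<forall>i. k \<le> i \<and> i < CARD('d) \<longrightarrow> \<mu> < lam i \<and> lam i < L"
    using spec y_ball by blast
  obtain lam' w' where eig': "sorted_eigenbasis (H (x n)) lam' w'" and w'_v: "\<forall>i<k. w' i = v i (x n)"
    using evecs by blast
  have k_d: "k \<le> CARD('d)"
    using k by linarith
  have "\<forall>i<k. lam' i \<le> - \<mu>" "\<forall>i. k \<le> i \<and> i < CARD('d) \<longrightarrow> \<mu> \<le> lam' i"
    using neg pos sorted_eigenbasis_eigenvalues_unique[OF eig eig'] k_d by force+
  then have hess_dir: "\<mu> * (e \<bullet> e) \<le> (P *v (H (x n) *v e)) \<bullet> e"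
    unfolding P_def by (rule PV_quadratic_form_ge[where v = v and y = "x n", OF eig' w'_v k_d])
  have isometry: "norm (P *v z) = norm z" for z
    unfolding P_def by (rule norm_PV_mult_vec[where v = v and y = "x n", OF eig' w'_v k_d])
  have taylor: "norm (grad (x n) - H (x n) *v e) \<le> M / 2 * (norm e)\<^sup>2"
    using lipschitz_derivative_remainder_le[of "cball xs \<delta>" grad "\<lambda>y h. H y *v h" M xs "x n"]
      hess lip y_ball crit params
    by (simp add: e_def matrix_vector_mult_diff_rdistrib)
  have descent: "\<mu> * (e \<bullet> e) \<le> 2 * ((P *v grad (x n)) \<bullet> e)"
    by (rule descent_direction_perturbed[OF _ isometry hess_dir taylor e_small]) simp
  have next_error: "x (Suc n) - xs = e - \<alpha> n *\<^sub>R (P *v G (x n) (\<omega> n))"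
    by (simp add: iter e_def P_def algebra_simps)
  have "bounded_linear (\<lambda>z. - (2 *\<^sub>R (P *v z)) \<bullet> e)"
    by (intro bounded_linear_inner_left_comp bounded_linear_minus
        bounded_linear_compose[OF bounded_linear_scaleR_right] matrix_vector_mul_bounded_linear)
  from prob_space.integral_bounded_linear_centered[OF prob this Gint]
  show ?thesis
    unfolding next_error
    using isometry_descent_step_le[OF _ isometry step(1) descent, of "G (x n) (\<omega> n)"]
    by (simp add: e_def P_def Gmean)
qed

end
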